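(* Let $R>0$ and let $K\subset\mathbb{R}^2$ be the closed disk of radius $R$ centered at the origin. Let $G\colon\mathbb{R}\to\mathbb{R}$ be twice continuously differentiable with $x^2+G(x)^2>0$ for all $x$, and define $$h(x)=x-\frac{\sqrt{x^2+G(x)^2}-R}{\sqrt{x^2+G(x)^2}}\cdot\frac{x\,(1-G'(x)^2)+2G(x)G'(x)}{1+G'(x)^2}.$$ Suppose $h$ is a bijection from $\mathbb{R}$ onto an open interval $J$ (possibly unbounded) containing $0$, with $h'(x)\ne0$ for all $x$. Then $G$ is an equidistant function (i.e. there is an admissible $f$ such that the equidistant set of $K$ and the epigraph of $f$ is the graph of $G$) if and only if the pair $x(t):=h^{-1}(t)$, $y(t):=G(x(t))$ ($t\in J$) is the equidistant parameterization for the graph of $G$, i.e. there is an admissible $f$ with $D_f=J$ and $x=x_f$, $y=y_f$ on $J$.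
   Context: $d(p,A)=\inf\{|p-q|\mid q\in A\}$ (Euclidean distance). A function $f\colon\mathbb{R}\to(0,\infty)$ is admissible if it is twice continuously differentiable, convex, and $t^2+f(t)^2>R^2$ for all $t$; its epigraph is $L_f=\{(t,y)\mid f(t)\le y\}$, and the equidistant set is $\{K=L_f\}=\{p\mid d(p,K)=d(p,L_f)\}$. For admissible $f$ put $\alpha_f(t)=\frac{tf'(t)-f(t)}{\sqrt{1+f'(t)^2}}$, $D_f=\{t\mid\alpha_f(t)<R\}$, and the equidistant parameterization $x_f,y_f\colon D_f\to\mathbb{R}$, $x_f(t)=t+\frac{f'(t)}{2\sqrt{1+f'(t)^2}}\cdot\frac{t^2+f(t)^2-R^2}{R-\alpha_f(t)}$, $y_f(t)=f(t)-\frac{1}{2\sqrt{1+f'(t)^2}}\cdot\frac{t^2+f(t)^2-R^2}{R-\alpha_f(t)}$. *)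

theory Defs
  imports "HOL-Analysis.Analysis"
begin

text \<open>Points of the plane are pairs of reals; the product norm on real \<times> real is
  the Euclidean norm, so infdist is the Euclidean distance to a set.\<close>

definition C2 :: "(real \<Rightarrow> real) \<Rightarrow> bool" where
  "C2 f \<longleftrightarrow> (\<forall>t. f differentiable (at t)) \<and> (\<forall>t. deriv f differentiable (at t))
      \<and> continuous_on UNIV (deriv (deriv f))"

definition admissible :: "real \<Rightarrow> (real \<Rightarrow> real) \<Rightarrow> bool" where
  "admissible R f \<longleftrightarrow> C2 f \<and> convex_on UNIV f \<and> (\<forall>t. f t > 0)
      \<and> (\<forall>t. t\<^sup>2 + (f t)\<^sup>2 > R\<^sup>2)"

definition epigraph :: "(real \<Rightarrow> real) \<Rightarrow> (real \<times> real) set" where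
  "epigraph f = {(t, y). f t \<le> y}"

definition equidistant_set :: "(real \<times> real) set \<Rightarrow> (real \<times> real) set \<Rightarrow> (real \<times> real) set" where
  "equidistant_set K L = {p. infdist p K = infdist p L}"

definition disk :: "real \<Rightarrow> (real \<times> real) set" where
  "disk R = cball (0, 0) R"

definition alpha :: "(real \<Rightarrow> real) \<Rightarrow> real \<Rightarrow> real" where
  "alpha f t = (t * deriv f t - f t) / sqrt (1 + (deriv f t)\<^sup>2)"

definition Dom :: "real \<Rightarrow> (real \<Rightarrow> real) \<Rightarrow> real set" where
  "Dom R f = {t. alpha f t < R}"

definition xpar :: "real \<Rightarrow> (real \<Rightarrow> real) \<Rightarrow> real \<Rightarrow> real" where
  "xpar R f t = t + deriv f t / (2 * sqrt (1 + (deriv f t)\<^sup>2))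
      * ((t\<^sup>2 + (f t)\<^sup>2 - R\<^sup>2) / (R - alpha f t))"

definition ypar :: "real \<Rightarrow> (real \<Rightarrow> real) \<Rightarrow> real \<Rightarrow> real" where
  "ypar R f t = f t - 1 / (2 * sqrt (1 + (deriv f t)\<^sup>2))
      * ((t\<^sup>2 + (f t)\<^sup>2 - R\<^sup>2) / (R - alpha f t))"

definition graph :: "(real \<Rightarrow> real) \<Rightarrow> (real \<times> real) set" where
  "graph G = {(x, G x) | x. True}"

definition equidistant_function :: "real \<Rightarrow> (real \<Rightarrow> real) \<Rightarrow> bool" where
  "equidistant_function R G \<longleftrightarrow>
     (\<exists>f. admissible R f \<and> equidistant_set (disk R) (epigraph f) = graph G)"

definition hfun :: "real \<Rightarrow> (real \<Rightarrow> real) \<Rightarrow> real \<Rightarrow> real" where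
  "hfun R G x = x - (sqrt (x\<^sup>2 + (G x)\<^sup>2) - R) / sqrt (x\<^sup>2 + (G x)\<^sup>2)
      * ((x * (1 - (deriv G x)\<^sup>2) + 2 * G x * deriv G x) / (1 + (deriv G x)\<^sup>2))"

end

theory Submission
  imports Defs
begin

text \<open>Let n(t) be the outward unit normal of the epigraph L of f at (t, f t). By the supporting
  half-plane at (t, f t), the point (t, f t) + s n(t) has distance s to L, and by the closest-point
  projection onto the closed convex set L every point outside L has this form. Such a point is
  equidistant from L and the disk K iff its norm is R + s, which forces \<alpha>_f(t) < R and
  s = (t^2 + f(t)^2 - R^2) / (2 (R - \<alpha>_f(t))): the equidistant set is exactly the
  image of D_f under (x_f, y_f).

  If this set is the graph of G, then along the graph |p| - |p - (t, f t)| is at most R, with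
  equality at p = (x_f(t), y_f(t)). The vanishing derivative there says that the radial unit vector
  and n(t) have the same component along the tangent (1, G'), so n(t) is the mirror image of the
  radial vector in the tangent line; written out, this is h(x_f(t)) = t. Hence x_f inverts h, and
  the equivalence follows.\<close>

lemma le_infdistI:
  "A \<noteq> {} \<Longrightarrow> (\<And>a. a \<in> A \<Longrightarrow> c \<le> dist x a) \<Longrightarrow> c \<le> infdist x A"
  by (simp add: infdist_notempty cINF_greatest)

lemma infdist_cball_ge:
  fixes p :: "'a::real_normed_vector"
  assumes "R \<ge> 0"
  shows "norm p - R \<le> infdist p (cball 0 R)"
proof (rule le_infdistI)
  show "cball 0 R \<noteq> {}" using assms by simp
  fix a :: 'a assume "a \<in> cball 0 R"
  then show "norm p - R \<le> dist p a"
    using norm_triangle_ineq2[of p a] by (simp add: dist_norm)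
qed

lemma infdist_cball_outside:
  fixes p :: "'a::real_normed_vector"
  assumes "R \<ge> 0" and "norm p \<ge> R"
  shows "infdist p (cball 0 R) = norm p - R"
proof (rule antisym)
  show "norm p - R \<le> infdist p (cball 0 R)" using assms(1) by (rule infdist_cball_ge)
  show "infdist p (cball 0 R) \<le> norm p - R"
  proof (cases "p = 0")
    case True
    with assms show ?thesis by simp
  next
    case False
    let ?c = "R / norm p"
    have c: "0 \<le> ?c" "?c \<le> 1" using False assms by auto
    have "dist p (?c *\<^sub>R p) = norm ((1 - ?c) *\<^sub>R p)"
      by (simp add: dist_norm scaleR_diff_left)
    also have "\<dots> = norm p - R" using c False by (simp add: left_diff_distrib)
    finally show ?thesis
      using False assms(1) infdist_le[of "?c *\<^sub>R p" "cball 0 R" p] by simp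
  qed
qed

lemma power2_norm_add_scaleR_unit:
  fixes q n :: "'a::real_inner"
  assumes "norm n = 1"
  shows "(norm (q + s *\<^sub>R n))\<^sup>2 = (norm q)\<^sup>2 + 2 * s * inner q n + s\<^sup>2"
proof -
  have "inner n n = 1" using assms by (simp flip: power2_norm_eq_inner)
  then show ?thesis
    unfolding power2_norm_eq_inner
    by (simp add: inner_add_left inner_add_right inner_commute power2_eq_square algebra_simps)
qed

lemma power2_norm_Pair: "(norm (a, b))\<^sup>2 = a\<^sup>2 + b\<^sup>2" for a b :: real
  by (simp add: norm_Pair)

lemma sqrt_one_plus_square_pos: "sqrt (1 + x\<^sup>2) > 0" for x :: real
  by (simp add: add_pos_nonneg)

lemma epigraph_eq_convex_epigraph: "epigraph f = Convex.epigraph UNIV f"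
  by (auto simp: epigraph_def Convex.epigraph_def)

lemma closed_epigraph:
  assumes "continuous_on UNIV f"
  shows "closed (epigraph f)"
proof -
  have "closed {p. f (fst p) \<le> snd p}"
    using assms
    by (intro closed_Collect_le) (auto intro!: continuous_intros continuous_on_compose2[of UNIV f])
  moreover have "epigraph f = {p. f (fst p) \<le> snd p}" by (auto simp: epigraph_def)
  ultimately show ?thesis by simp
qed

definition epigraph_normal :: "(real \<Rightarrow> real) \<Rightarrow> real \<Rightarrow> real \<times> real" where
  "epigraph_normal f t = (1 / sqrt (1 + (deriv f t)\<^sup>2)) *\<^sub>R (deriv f t, -1)"

lemma norm_epigraph_normal: "norm (epigraph_normal f t) = 1"
proof -
  have "(sqrt (1 + (deriv f t)\<^sup>2))\<^sup>2 = 1 + (deriv f t)\<^sup>2" by simp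
  moreover have "1 + (deriv f t)\<^sup>2 \<noteq> 0" by (simp add: add_pos_nonneg order_less_imp_not_eq2)
  ultimately show ?thesis
    by (simp add: epigraph_normal_def norm_Pair power_divide add_divide_distrib[symmetric])
qed

lemma inner_epigraph_normal:
  "inner (a, b) (epigraph_normal f t) = (a * deriv f t - b) / sqrt (1 + (deriv f t)\<^sup>2)"
  by (simp add: epigraph_normal_def diff_divide_distrib)

lemma alpha_eq_inner_epigraph_normal: "alpha f t = inner (t, f t) (epigraph_normal f t)"
  by (simp add: alpha_def inner_epigraph_normal)

lemma inner_epigraph_normal_nonpos:
  assumes "convex_on UNIV f" and "\<And>u. f differentiable (at u)" and "(u, v) \<in> epigraph f"
  shows "inner ((u, v) - (t, f t)) (epigraph_normal f t) \<le> 0"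
proof -
  have "deriv f t * (u - t) \<le> f u - f t"
    using assms(1,2) by (intro convex_on_imp_above_tangent[where A = UNIV])
      (auto simp: DERIV_deriv_iff_real_differentiable)
  with assms(3) have "(u - t) * deriv f t - (v - f t) \<le> 0"
    by (auto simp: epigraph_def algebra_simps)
  then show ?thesis
    using sqrt_one_plus_square_pos[of "deriv f t"]
    by (simp add: inner_epigraph_normal divide_nonpos_pos)
qed

lemma infdist_epigraph_along_normal:
  assumes "convex_on UNIV f" and "\<And>u. f differentiable (at u)" and "s \<ge> 0"
  shows "infdist ((t, f t) + s *\<^sub>R epigraph_normal f t) (epigraph f) = s"
proof (rule antisym)
  let ?q = "(t, f t)" and ?n = "epigraph_normal f t"
  have "?q \<in> epigraph f" by (simp add: epigraph_def)
  moreover have "dist (?q + s *\<^sub>R ?n) ?q = s"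
    using assms(3) by (simp add: dist_norm norm_epigraph_normal)
  ultimately show "infdist (?q + s *\<^sub>R ?n) (epigraph f) \<le> s"
    by (metis infdist_le)
  show "s \<le> infdist (?q + s *\<^sub>R ?n) (epigraph f)"
  proof (rule le_infdistI)
    show "epigraph f \<noteq> {}" using \<open>?q \<in> epigraph f\<close> by blast
    fix z assume "z \<in> epigraph f"
    then have "inner (z - ?q) ?n \<le> 0"
      using inner_epigraph_normal_nonpos[OF assms(1,2)] by (cases z) auto
    moreover have "inner (?q + s *\<^sub>R ?n - z) ?n = s - inner (z - ?q) ?n"
      using norm_epigraph_normal[of f t]
      by (simp add: inner_diff_left inner_add_left flip: power2_norm_eq_inner)
    ultimately have "s \<le> inner (?q + s *\<^sub>R ?n - z) ?n" by simp
    also have "\<dots> \<le> dist (?q + s *\<^sub>R ?n) z"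
      using norm_cauchy_schwarz[of "?q + s *\<^sub>R ?n - z" ?n] by (simp add: dist_norm norm_epigraph_normal)
    finally show "s \<le> dist (?q + s *\<^sub>R ?n) z" .
  qed
qed

lemma notin_epigraph_imp_along_normal:
  assumes cvx: "convex_on UNIV f" and diff: "\<And>u. f differentiable (at u)"
    and p: "p \<notin> epigraph f"
  shows "\<exists>t s. s > 0 \<and> p = (t, f t) + s *\<^sub>R epigraph_normal f t"
proof -
  let ?L = "epigraph f"
  have "continuous_on UNIV f"
    using diff by (meson differentiable_imp_continuous_within continuous_at_imp_continuous_on)
  then have closed: "closed ?L" by (rule closed_epigraph)
  have nonempty: "?L \<noteq> {}" by (auto simp: epigraph_def)
  have convex: "convex ?L"
    using cvx by (simp add: epigraph_eq_convex_epigraph convex_epigraphI)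
  obtain a b where ab: "p = (a, b)" by fastforce
  obtain t y where ty: "closest_point ?L p = (t, y)" by fastforce
  have "(t, y) \<in> ?L" using closest_point_in_set[OF closed nonempty] ty by metis
  then have fty: "f t \<le> y" by (simp add: epigraph_def)
  have dot: "(a - t) * (u - t) + (b - y) * (v - y) \<le> 0" if "f u \<le> v" for u v
    using closest_point_dot[OF convex closed, of "(u, v)" p] that ab ty by (simp add: epigraph_def)
  \<comment> \<open>strictly above the graph, the closest point could move vertically both ways, forcing p = (t, y)\<close>
  have y: "y = f t"
  proof (rule ccontr)
    assume "y \<noteq> f t"
    with fty have "f t < y" by simp
    with dot[of t "f t"] dot[of t "y + 1"] have "b = y"
      by (simp add: mult_le_0_iff)
    with dot[of a "max y (f a)"] have "a = t"
      by (simp add: mult_le_0_iff) linarith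
    with \<open>b = y\<close> \<open>(t, y) \<in> ?L\<close> p ab show False by simp
  qed
  define d where "d = deriv f t"
  define g where "g u = (a - t) * (u - t) + (b - f t) * (f u - f t)" for u
  have "(g has_real_derivative (a - t) + (b - f t) * d) (at t)"
    unfolding g_def d_def using diff
    by (auto intro!: derivative_eq_intros simp: DERIV_deriv_iff_real_differentiable)
  moreover have "g u \<le> g t" for u
    using dot[of u "f u"] y by (simp add: g_def)
  ultimately have normal: "a - t = (f t - b) * d"
    by (auto dest!: DERIV_local_max[of g _ t 1] simp: algebra_simps)
  define \<sigma> where "\<sigma> = f t - b"
  have "\<sigma> \<ge> 0" using dot[of t "f t + 1"] y by (simp add: \<sigma>_def)
  moreover have "\<sigma> \<noteq> 0"
    using normal p ab \<open>(t, y) \<in> ?L\<close> y by (auto simp: \<sigma>_def)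
  ultimately have "\<sigma> > 0" by simp
  define w where "w = sqrt (1 + d\<^sup>2)"
  have "w > 0" unfolding w_def by (rule sqrt_one_plus_square_pos)
  have "p = (t, f t) + (\<sigma> * w) *\<^sub>R epigraph_normal f t"
    using ab normal \<open>w > 0\<close> by (simp add: epigraph_normal_def \<sigma>_def flip: d_def w_def)
  then show ?thesis
    using \<open>\<sigma> > 0\<close> \<open>w > 0\<close> by (metis mult_pos_pos)
qed

definition equidistant_radius :: "real \<Rightarrow> (real \<Rightarrow> real) \<Rightarrow> real \<Rightarrow> real" where
  "equidistant_radius R f t = (t\<^sup>2 + (f t)\<^sup>2 - R\<^sup>2) / (2 * (R - alpha f t))"

lemma xpar_ypar_along_normal:
  "(xpar R f t, ypar R f t) = (t, f t) + equidistant_radius R f t *\<^sub>R epigraph_normal f t"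
proof -
  have x: "x + d / (2 * w) * (A / B) = x + A / (2 * B) * (1 / w * d)"
    and y: "y - 1 / (2 * w) * (A / B) = y + A / (2 * B) * (1 / w * -1)" for x y d w A B :: real
    by (simp_all add: ac_simps)
  show ?thesis
    unfolding xpar_def ypar_def equidistant_radius_def epigraph_normal_def x y by simp
qed

lemma admissible_norm_gt:
  assumes "admissible R f"
  shows "R < norm (t, f t)"
proof -
  have "R\<^sup>2 < (norm (t, f t))\<^sup>2"
    using assms by (simp add: admissible_def power2_norm_Pair)
  then show ?thesis
    by (metis abs_le_square_iff abs_of_nonneg norm_ge_zero not_le abs_ge_self order.trans)
qed

lemma admissible_disk_epigraph_disjoint:
  assumes "admissible R f"
  shows "disk R \<inter> epigraph f = {}"
proof (intro equalityI subsetI)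
  fix p assume p: "p \<in> disk R \<inter> epigraph f"
  obtain a b where ab: "p = (a, b)" by fastforce
  have "0 < f a" "R\<^sup>2 < a\<^sup>2 + (f a)\<^sup>2" using assms by (auto simp: admissible_def)
  moreover have "f a \<le> b" using p ab by (simp add: epigraph_def)
  moreover have "(f a)\<^sup>2 \<le> b\<^sup>2" using calculation by (simp add: power_mono)
  ultimately have "R\<^sup>2 < a\<^sup>2 + b\<^sup>2" by linarith
  moreover have "norm p \<le> R" using p by (simp add: disk_def flip: zero_prod_def)
  then have "(norm p)\<^sup>2 \<le> R\<^sup>2" by (simp add: power_mono)
  ultimately show "p \<in> {}" using ab by (simp add: norm_Pair)
qed simp

lemma disk_eq_cball: "disk R = cball 0 R"
  by (simp add: disk_def zero_prod_def)

lemma equidistant_radius_pos: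
  assumes "admissible R f" and "t \<in> Dom R f"
  shows "equidistant_radius R f t > 0"
  using assms by (simp add: admissible_def Dom_def equidistant_radius_def)

lemma norm_equidistant_point:
  assumes adm: "admissible R f" and "R > 0" and t: "t \<in> Dom R f"
  shows "norm (xpar R f t, ypar R f t) = R + equidistant_radius R f t"
proof -
  let ?s = "equidistant_radius R f t"
  have "R - alpha f t \<noteq> 0" using t by (simp add: Dom_def)
  then have radius: "t\<^sup>2 + (f t)\<^sup>2 - R\<^sup>2 = 2 * ?s * (R - alpha f t)"
    by (simp add: equidistant_radius_def field_simps)
  have "(norm (xpar R f t, ypar R f t))\<^sup>2 = t\<^sup>2 + (f t)\<^sup>2 + 2 * ?s * alpha f t + ?s\<^sup>2"
    unfolding xpar_ypar_along_normal power2_norm_add_scaleR_unit[OF norm_epigraph_normal]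
    by (simp add: power2_norm_Pair alpha_eq_inner_epigraph_normal)
  also have "\<dots> = (R + ?s)\<^sup>2"
    using radius by (simp add: power2_eq_square algebra_simps)
  finally show ?thesis
    using equidistant_radius_pos[OF adm t] \<open>R > 0\<close> by (simp add: power2_eq_iff_nonneg)
qed

lemma parameterized_mem_equidistant_set:
  assumes adm: "admissible R f" and "R > 0" and t: "t \<in> Dom R f"
  shows "(xpar R f t, ypar R f t) \<in> equidistant_set (disk R) (epigraph f)"
proof -
  let ?s = "equidistant_radius R f t"
  have "convex_on UNIV f" and "\<And>u. f differentiable (at u)"
    using adm by (auto simp: admissible_def C2_def)
  then have "infdist (xpar R f t, ypar R f t) (epigraph f) = ?s"
    unfolding xpar_ypar_along_normal
    using equidistant_radius_pos[OF adm t] by (simp add: infdist_epigraph_along_normal)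
  moreover have "infdist (xpar R f t, ypar R f t) (disk R) = ?s"
    using norm_equidistant_point[OF assms] equidistant_radius_pos[OF adm t] \<open>R > 0\<close>
    by (simp add: disk_eq_cball infdist_cball_outside)
  ultimately show ?thesis by (simp add: equidistant_set_def)
qed

lemma mem_equidistant_set_imp_parameterized:
  assumes adm: "admissible R f" and "R > 0"
    and p: "p \<in> equidistant_set (disk R) (epigraph f)"
  shows "\<exists>t \<in> Dom R f. p = (xpar R f t, ypar R f t)"
proof -
  have cvx: "convex_on UNIV f" and diff: "\<And>u. f differentiable (at u)"
    using adm by (auto simp: admissible_def C2_def)
  have eq: "infdist p (cball 0 R) = infdist p (epigraph f)"
    using p by (simp add: equidistant_set_def disk_eq_cball)
  have "p \<notin> epigraph f"
  proof
    assume "p \<in> epigraph f"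
    with eq have "p \<in> cball 0 R"
      using in_closed_iff_infdist_zero[of "cball 0 R" p] \<open>R > 0\<close> by simp
    with \<open>p \<in> epigraph f\<close> show False
      using admissible_disk_epigraph_disjoint[OF adm] by (auto simp: disk_eq_cball)
  qed
  then obtain t s where "s > 0" and p_eq: "p = (t, f t) + s *\<^sub>R epigraph_normal f t"
    using notin_epigraph_imp_along_normal[OF cvx diff] by blast
  then have "infdist p (cball 0 R) = s"
    using eq infdist_epigraph_along_normal[OF cvx diff] by simp
  moreover from this have "p \<notin> cball 0 R"
    using \<open>s > 0\<close> by auto
  ultimately have "norm p = R + s"
    using \<open>R > 0\<close> infdist_cball_outside[of R p] by simp
  then have "(R + s)\<^sup>2 = (norm p)\<^sup>2" by simp
  also have "\<dots> = t\<^sup>2 + (f t)\<^sup>2 + 2 * s * alpha f t + s\<^sup>2"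
    unfolding p_eq power2_norm_add_scaleR_unit[OF norm_epigraph_normal]
    by (simp add: power2_norm_Pair alpha_eq_inner_epigraph_normal)
  finally have radius: "t\<^sup>2 + (f t)\<^sup>2 - R\<^sup>2 = 2 * s * (R - alpha f t)"
    by (simp add: power2_eq_square algebra_simps)
  moreover have "t\<^sup>2 + (f t)\<^sup>2 > R\<^sup>2" using adm by (simp add: admissible_def)
  ultimately have "0 < 2 * s * (R - alpha f t)" by linarith
  with \<open>s > 0\<close> have "alpha f t < R" by (simp add: zero_less_mult_iff)
  moreover from this radius have "s = equidistant_radius R f t"
    by (simp add: equidistant_radius_def field_simps)
  ultimately show ?thesis
    using p_eq by (auto simp: Dom_def xpar_ypar_along_normal)
qed

lemma equidistant_set_disk_epigraph:
  assumes "admissible R f" and "R > 0"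
  shows "equidistant_set (disk R) (epigraph f) = (\<lambda>t. (xpar R f t, ypar R f t)) ` Dom R f"
  using mem_equidistant_set_imp_parameterized[OF assms]
    parameterized_mem_equidistant_set[OF assms] by blast

lemma has_real_derivative_dist_graph:
  assumes G: "(G has_real_derivative g) (at x)" and ne: "(x, G x) \<noteq> (a, b)"
  shows "((\<lambda>u. dist (u, G u) (a, b)) has_real_derivative
      ((x - a) + (G x - b) * g) / dist (x, G x) (a, b)) (at x)"
proof -
  let ?F = "\<lambda>u. (u - a)\<^sup>2 + (G u - b)\<^sup>2" and ?D = "(x - a) + (G x - b) * g"
  have dist: "dist (u, G u) (a, b) = sqrt (?F u)" for u
    by (simp add: dist_Pair_Pair dist_real_def)
  have "?F x > 0" using ne by (simp add: sum_power2_gt_zero_iff)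
  moreover have "(?F has_real_derivative 2 * ?D) (at x)"
    by (auto intro!: derivative_eq_intros G simp: algebra_simps)
  ultimately have "((\<lambda>u. sqrt (?F u)) has_real_derivative inverse (sqrt (?F x)) / 2 * (2 * ?D)) (at x)"
    by (rule DERIV_chain2[OF DERIV_real_sqrt])
  moreover have "inverse w / 2 * (2 * D) = D / w" for w D :: real
    by (simp add: field_simps)
  ultimately show ?thesis
    by (simp only: dist)
qed

lemma equidistant_graph_tangency:
  assumes adm: "admissible R f" and "R > 0"
    and graph: "graph G \<subseteq> equidistant_set (disk R) (epigraph f)"
    and G: "(G has_real_derivative g) (at x)"
    and t: "t \<in> Dom R f" and x: "(xpar R f t, ypar R f t) = (x, G x)"
  shows "(x + G x * g) / (R + equidistant_radius R f t) =
    fst (epigraph_normal f t) + g * snd (epigraph_normal f t)"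
proof -
  let ?s = "equidistant_radius R f t" and ?n = "epigraph_normal f t"
  define \<psi> where "\<psi> u = dist (u, G u) (0, 0) - dist (u, G u) (t, f t)" for u
  have s: "?s > 0" using equidistant_radius_pos[OF adm t] .
  have normal: "(x, G x) - (t, f t) = ?s *\<^sub>R ?n"
    using x by (simp add: xpar_ypar_along_normal flip: x)
  have dist_origin: "dist (x, G x) (0, 0) = R + ?s"
    using norm_equidistant_point[OF adm \<open>R > 0\<close> t] x by (simp add: dist_norm zero_prod_def)
  have dist_foot: "dist (x, G x) (t, f t) = ?s"
    using normal s by (simp add: dist_norm norm_epigraph_normal)
  have "\<psi> u \<le> \<psi> x" for u
  proof -
    have "(u, G u) \<in> equidistant_set (disk R) (epigraph f)"
      using graph by (auto simp: graph_def)
    then have "infdist (u, G u) (cball 0 R) = infdist (u, G u) (epigraph f)"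
      by (simp add: equidistant_set_def disk_eq_cball)
    moreover have "infdist (u, G u) (epigraph f) \<le> dist (u, G u) (t, f t)"
      by (rule infdist_le) (simp add: epigraph_def)
    ultimately have "\<psi> u \<le> R"
      using infdist_cball_ge[of R "(u, G u)"] \<open>R > 0\<close> by (simp add: \<psi>_def dist_norm zero_prod_def)
    then show ?thesis using dist_origin dist_foot by (simp add: \<psi>_def)
  qed
  moreover have "(\<psi> has_real_derivative
      (x + G x * g) / (R + ?s) - ((x - t) + (G x - f t) * g) / ?s) (at x)"
  proof -
    have "(x, G x) \<noteq> (0, 0)" "(x, G x) \<noteq> (t, f t)"
      using dist_origin dist_foot s \<open>R > 0\<close> by (auto simp del: dist_0_norm)
    from DERIV_diff[OF has_real_derivative_dist_graph[OF G this(1)]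
        has_real_derivative_dist_graph[OF G this(2)]]
    show ?thesis
      unfolding \<psi>_def dist_origin dist_foot by simp
  qed
  ultimately have "(x + G x * g) / (R + ?s) = ((x - t) + (G x - f t) * g) / ?s"
    by (auto dest!: DERIV_local_max[of \<psi> _ x 1])
  also have "\<dots> = fst ?n + g * snd ?n"
    using normal s by (auto simp: prod_eq_iff field_simps)
  finally show ?thesis .
qed

text \<open>The vector n is the mirror image of a in the line spanned by (1, g).\<close>

lemma unit_vector_reflection_fst:
  fixes a1 a2 n1 n2 g :: real
  assumes a: "a1\<^sup>2 + a2\<^sup>2 = 1" and n: "n1\<^sup>2 + n2\<^sup>2 = 1"
    and tangential: "a1 + g * a2 = n1 + g * n2" and ne: "(a1, a2) \<noteq> (n1, n2)"
  shows "n1 = (a1 * (1 - g\<^sup>2) + 2 * g * a2) / (1 + g\<^sup>2)"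
proof -
  define P where "P = a1 + g * a2"
  define A where "A = a2 - g * a1"
  define B where "B = n2 - g * n1"
  have pos: "1 + g\<^sup>2 > 0" by (simp add: add_pos_nonneg)
  have P_n: "P = n1 + g * n2" unfolding P_def tangential ..
  have "(1 + g\<^sup>2) * (a1\<^sup>2 + a2\<^sup>2) = P\<^sup>2 + A\<^sup>2"
    unfolding P_def A_def by (simp add: power2_eq_square algebra_simps)
  moreover have "(1 + g\<^sup>2) * (n1\<^sup>2 + n2\<^sup>2) = P\<^sup>2 + B\<^sup>2"
    unfolding P_n B_def by (simp add: power2_eq_square algebra_simps)
  ultimately have "A\<^sup>2 = B\<^sup>2" using a n by simp
  have a_PA: "a1 * (1 + g\<^sup>2) = P - g * A" "a2 * (1 + g\<^sup>2) = g * P + A"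
    unfolding P_def A_def by (simp_all add: power2_eq_square algebra_simps)
  have n_PB: "n1 * (1 + g\<^sup>2) = P - g * B" "n2 * (1 + g\<^sup>2) = g * P + B"
    unfolding P_n B_def by (simp_all add: power2_eq_square algebra_simps)
  have "A \<noteq> B"
    using a_PA n_PB ne pos by (metis mult_right_cancel less_irrefl)
  with \<open>A\<^sup>2 = B\<^sup>2\<close> have "B = - A" by (simp add: power2_eq_iff)
  with n_PB have "n1 * (1 + g\<^sup>2) = a1 * (1 - g\<^sup>2) + 2 * g * a2"
    unfolding P_def A_def by (simp add: power2_eq_square algebra_simps)
  with pos show ?thesis by (simp add: field_simps)
qed

lemma hfun_at_equidistant_point:
  assumes adm: "admissible R f" and "R > 0"
    and graph: "graph G \<subseteq> equidistant_set (disk R) (epigraph f)"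
    and G: "G differentiable (at x)"
    and t: "t \<in> Dom R f" and x: "(xpar R f t, ypar R f t) = (x, G x)"
  shows "hfun R G x = t"
proof -
  let ?s = "equidistant_radius R f t" and ?g = "deriv G x"
  obtain n1 n2 where n: "epigraph_normal f t = (n1, n2)" by fastforce
  define N where "N = R + ?s"
  have s: "?s > 0" using equidistant_radius_pos[OF adm t] .
  then have "N > 0" using \<open>R > 0\<close> by (simp add: N_def)
  have "(x, G x) = (t, f t) + ?s *\<^sub>R (n1, n2)"
    unfolding x[symmetric] n[symmetric] by (rule xpar_ypar_along_normal)
  then have normal: "x = t + ?s * n1" "G x = f t + ?s * n2" by auto
  have "norm (x, G x) = N"
    using norm_equidistant_point[OF adm \<open>R > 0\<close> t] x by (simp add: N_def)
  then have radial: "(x / N)\<^sup>2 + (G x / N)\<^sup>2 = 1"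
    using \<open>N > 0\<close> by (simp add: power_divide add_divide_distrib[symmetric] flip: power2_norm_Pair)
  have unit: "n1\<^sup>2 + n2\<^sup>2 = 1"
    using norm_epigraph_normal[of f t] n by (simp flip: power2_norm_Pair)
  have "x / N + ?g * (G x / N) = n1 + ?g * n2"
    using equidistant_graph_tangency[OF adm \<open>R > 0\<close> graph _ t x, of ?g] G n
    by (simp add: DERIV_deriv_iff_real_differentiable N_def add_divide_distrib mult.commute)
  moreover have "(x / N, G x / N) \<noteq> (n1, n2)"
  proof
    assume "(x / N, G x / N) = (n1, n2)"
    then have "(t, f t) = (R / N) *\<^sub>R (x, G x)"
      using normal \<open>N > 0\<close> by (auto simp: N_def field_simps)
    then have "norm (t, f t) = \<bar>R / N\<bar> * norm (x, G x)"
      by (metis norm_scaleR)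
    also have "\<dots> = R"
      using \<open>norm (x, G x) = N\<close> \<open>N > 0\<close> \<open>R > 0\<close> by simp
    finally show False
      using admissible_norm_gt[OF adm, of t] by simp
  qed
  ultimately have "n1 = (x / N * (1 - ?g\<^sup>2) + 2 * ?g * (G x / N)) / (1 + ?g\<^sup>2)"
    using unit_vector_reflection_fst[OF radial unit] by blast
  also have "\<dots> = (x * (1 - ?g\<^sup>2) + 2 * G x * ?g) / (1 + ?g\<^sup>2) / N"
    by (simp add: add_divide_distrib ac_simps)
  finally have n1: "?s * n1 = ?s / N * ((x * (1 - ?g\<^sup>2) + 2 * G x * ?g) / (1 + ?g\<^sup>2))"
    by simp
  have "sqrt (x\<^sup>2 + (G x)\<^sup>2) = N"
    using \<open>norm (x, G x) = N\<close> by (simp add: norm_Pair)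
  then have "hfun R G x = x - ?s * n1"
    unfolding hfun_def n1 by (simp add: N_def)
  then show ?thesis using normal by simp
qed

lemma equidistant_parameterization_of_graph:
  assumes adm: "admissible R f" and "R > 0"
    and E: "equidistant_set (disk R) (epigraph f) = graph G"
    and G: "\<And>x. G differentiable (at x)"
    and h: "bij_betw (hfun R G) UNIV J"
  shows "Dom R f = J \<and>
    (\<forall>t\<in>J. inv (hfun R G) t = xpar R f t \<and> G (inv (hfun R G) t) = ypar R f t)"
proof -
  let ?h = "hfun R G"
  have graph_eq: "graph G = (\<lambda>t. (xpar R f t, ypar R f t)) ` Dom R f"
    using equidistant_set_disk_epigraph[OF adm \<open>R > 0\<close>] E by simp
  have on_graph: "G (xpar R f t) = ypar R f t \<and> ?h (xpar R f t) = t" if t: "t \<in> Dom R f" for t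
  proof -
    have "(xpar R f t, ypar R f t) \<in> graph G"
      using graph_eq t by blast
    then have "G (xpar R f t) = ypar R f t"
      by (auto simp: graph_def)
    moreover from this have "?h (xpar R f t) = t"
      using hfun_at_equidistant_point[OF adm \<open>R > 0\<close> _ G t] E by simp
    ultimately show ?thesis ..
  qed
  have "Dom R f = J"
  proof
    show "Dom R f \<subseteq> J"
      using on_graph bij_betwE[OF h] by (metis UNIV_I subsetI)
    show "J \<subseteq> Dom R f"
    proof
      fix t assume "t \<in> J"
      then have "?h (inv ?h t) = t" by (meson bij_betw_inv_into_right h)
      moreover have "(inv ?h t, G (inv ?h t)) \<in> graph G" by (auto simp: graph_def)
      then obtain t' where "t' \<in> Dom R f" "(xpar R f t', ypar R f t') = (inv ?h t, G (inv ?h t))"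
        unfolding graph_eq by auto
      ultimately show "t \<in> Dom R f" using on_graph by (metis prod.inject)
    qed
  qed
  moreover have "inv ?h t = xpar R f t" if "t \<in> Dom R f" for t
    using on_graph[OF that] bij_betw_inv_into_left[OF h] by (metis UNIV_I)
  ultimately show ?thesis using on_graph by simp
qed

lemma graph_eq_image_of_parameterization:
  assumes "bij_betw h UNIV J"
    and "\<forall>t\<in>J. inv h t = X t \<and> G (inv h t) = Y t"
  shows "graph G = (\<lambda>t. (X t, Y t)) ` J"
proof -
  have "inv h ` J = UNIV"
    using bij_betw_inv_into[OF assms(1)] by (simp add: bij_betw_def)
  have "graph G = (\<lambda>x. (x, G x)) ` UNIV" by (auto simp: graph_def)
  also have "\<dots> = (\<lambda>x. (x, G x)) ` inv h ` J" using \<open>inv h ` J = UNIV\<close> by simp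
  also have "\<dots> = (\<lambda>t. (inv h t, G (inv h t))) ` J" by (simp add: image_image)
  also have "\<dots> = (\<lambda>t. (X t, Y t)) ` J"
    using assms(2) by (intro image_cong) auto
  finally show ?thesis .
qed

theorem theorem9:
  fixes R :: real and G :: "real \<Rightarrow> real" and J :: "real set"
  assumes "R > 0"
    and "C2 G"
    and "\<forall>x. x\<^sup>2 + (G x)\<^sup>2 > 0"
    and "open J" and "is_interval J" and "0 \<in> J"
    and "bij_betw (hfun R G) UNIV J"
    and "\<forall>x. deriv (hfun R G) x \<noteq> 0"
  shows "equidistant_function R G \<longleftrightarrow>
    (\<exists>f. admissible R f \<and> Dom R f = J \<and>
       (\<forall>t\<in>J. inv (hfun R G) t = xpar R f t \<and> G (inv (hfun R G) t) = ypar R f t))"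
proof
  assume "equidistant_function R G"
  then obtain f where "admissible R f" "equidistant_set (disk R) (epigraph f) = graph G"
    by (auto simp: equidistant_function_def)
  moreover have "\<And>x. G differentiable (at x)" using \<open>C2 G\<close> by (simp add: C2_def)
  ultimately show "\<exists>f. admissible R f \<and> Dom R f = J \<and>
      (\<forall>t\<in>J. inv (hfun R G) t = xpar R f t \<and> G (inv (hfun R G) t) = ypar R f t)"
    using equidistant_parameterization_of_graph[OF _ \<open>R > 0\<close> _ _ \<open>bij_betw (hfun R G) UNIV J\<close>]
    by blast
next
  assume "\<exists>f. admissible R f \<and> Dom R f = J \<and>
      (\<forall>t\<in>J. inv (hfun R G) t = xpar R f t \<and> G (inv (hfun R G) t) = ypar R f t)"
  then obtain f where f: "admissible R f" "Dom R f = J"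
    and par: "\<forall>t\<in>J. inv (hfun R G) t = xpar R f t \<and> G (inv (hfun R G) t) = ypar R f t"
    by blast
  have "equidistant_set (disk R) (epigraph f) = graph G"
    using equidistant_set_disk_epigraph[OF f(1) \<open>R > 0\<close>]
      graph_eq_image_of_parameterization[OF \<open>bij_betw (hfun R G) UNIV J\<close> par] f(2)
    by simp
  with f(1) show "equidistant_function R G"
    by (auto simp: equidistant_function_def)
qed

end
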